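(* Let $G$ be a topological gyrogroup and let $\phi:G\to\mathbb{R}$ be a continuous bounded function. Then there is a bounded continuous function $\Phi:G^{\bullet}\to\mathbb{R}$ with $\Phi(x^{\bullet})=\phi(x)$ for all $x\in G$, where $x^{\bullet}$ is the constant function with value $x$.
   Context: A gyrogroup is a set $G$ with a binary operation $\oplus$ such that: (G1) there is a unique identity $0$ with $0\oplus a=a=a\oplus 0$; (G2) each $x$ has a unique inverse $\ominus x$ with $\ominus x\oplus x=0=x\oplus(\ominus x)$; (G3) for all $x,y$ there is an automorphism $\mathrm{gyr}[x,y]$ of $(G,\oplus)$ with $x\oplus(y\oplus z)=(x\oplus y)\oplus \mathrm{gyr}[x,y](z)$ for all $z$; (G4) $\mathrm{gyr}[x\oplus y,y]=\mathrm{gyr}[x,y]$. A topological gyrogroup is a gyrogroup with a topology (all spaces are assumed $T_1$) such that $\oplus$ is jointly continuous and $x\mapsto\ominus x$ is continuous. Construction: let $J=[0,1)$ and let $G^{\bullet}$ be the set of all functions $f:J\to G$ for which there exist $0=a_0<a_1<\dots<a_n=1$ with $f$ constant on each $[a_k,a_{k+1})$, with pointwise operation $(f\oplus^{\bullet}g)(r)=f(r)\oplus g(r)$. For an open neighbourhood $V$ of $0$ in $G$ and $\varepsilon>0$ let $O(V,\varepsilon)=\{f\in G^{\bullet}:\mu(\{r\in J: f(r)\notin V\})<\varepsilon\}$, $\mu$ Lebesgue measure. $G^{\bullet}$ carries the topological gyrogroup topology in which the sets $f\oplus^{\bullet}O(V,\varepsilon)$ form a local base at each $f\in G^{\bullet}$.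 *)

theory Defs
  imports "HOL-Analysis.Analysis"
begin

definition gyrogroup :: "('a \<Rightarrow> 'a \<Rightarrow> 'a) \<Rightarrow> 'a \<Rightarrow> bool" where
  "gyrogroup op z \<longleftrightarrow>
     (\<forall>a. op z a = a \<and> op a z = a) \<and>
     (\<forall>x. \<exists>!y. op y x = z \<and> op x y = z) \<and>
     (\<exists>gyr :: 'a \<Rightarrow> 'a \<Rightarrow> 'a \<Rightarrow> 'a.
        (\<forall>x y. bij (gyr x y) \<and>
               (\<forall>a b. gyr x y (op a b) = op (gyr x y a) (gyr x y b)) \<and>
               (\<forall>c. op x (op y c) = op (op x y) (gyr x y c))) \<and>
        (\<forall>x y. gyr (op x y) y = gyr x y))"

definition ginv :: "('a \<Rightarrow> 'a \<Rightarrow> 'a) \<Rightarrow> 'a \<Rightarrow> 'a \<Rightarrow> 'a" where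
  "ginv op z x = (THE y. op y x = z \<and> op x y = z)"

definition top_gyrogroup :: "('a \<Rightarrow> 'a \<Rightarrow> 'a) \<Rightarrow> 'a \<Rightarrow> 'a topology \<Rightarrow> bool" where
  "top_gyrogroup op z T \<longleftrightarrow>
     gyrogroup op z \<and> topspace T = UNIV \<and> t1_space T \<and>
     continuous_map (prod_topology T T) T (\<lambda>(x, y). op x y) \<and>
     continuous_map T T (ginv op z)"

text \<open>G-bullet: step functions on J = [0,1), represented as functions real => 'a
  which take the value z outside J (so that they are determined by their values on J).\<close>
definition step_funs :: "'a \<Rightarrow> (real \<Rightarrow> 'a) set" where
  "step_funs z = {f. (\<forall>r. r \<notin> {0..<1} \<longrightarrow> f r = z) \<and>
     (\<exists>(n::nat) (a::nat \<Rightarrow> real). a 0 = 0 \<and> a n = 1 \<and> (\<forall>k<n. a k < a (Suc k)) \<and>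
        (\<forall>k<n. \<forall>r \<in> {a k..<a (Suc k)}. f r = f (a k)))}"

definition bullet_op :: "('a \<Rightarrow> 'a \<Rightarrow> 'a) \<Rightarrow> (real \<Rightarrow> 'a) \<Rightarrow> (real \<Rightarrow> 'a) \<Rightarrow> (real \<Rightarrow> 'a)" where
  "bullet_op op f g = (\<lambda>r. op (f r) (g r))"

definition bullet_const :: "'a \<Rightarrow> 'a \<Rightarrow> (real \<Rightarrow> 'a)" where
  "bullet_const z x = (\<lambda>r. if r \<in> {0..<1} then x else z)"

definition O_nbhd :: "'a \<Rightarrow> 'a set \<Rightarrow> real \<Rightarrow> (real \<Rightarrow> 'a) set" where
  "O_nbhd z V \<epsilon> = {f \<in> step_funs z. measure lebesgue {r \<in> {0..<1}. f r \<notin> V} < \<epsilon>}"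

definition bullet_topology :: "('a \<Rightarrow> 'a \<Rightarrow> 'a) \<Rightarrow> 'a \<Rightarrow> 'a topology \<Rightarrow> (real \<Rightarrow> 'a) topology" where
  "bullet_topology op z T = topology (\<lambda>U. U \<subseteq> step_funs z \<and>
     (\<forall>f \<in> U. \<exists>V \<epsilon>. openin T V \<and> z \<in> V \<and> \<epsilon> > 0 \<and>
        bullet_op op f ` O_nbhd z V \<epsilon> \<subseteq> U))"

end

theory Submission
  imports Defs
begin

text \<open>
  The extension is the mean value \<open>\<Phi>(f) = \<integral>\<^sub>0\<^sup>1 \<phi>(f(r)) dr\<close>; it agrees with \<open>\<phi>\<close> on constant
  functions and is bounded by \<open>sup |\<phi>|\<close>. For continuity at a step function \<open>f\<close>, which takes
  only finitely many values \<open>c\<close>, continuity of \<open>c \<oplus> -\<close> at \<open>0\<close> gives one neighbourhood \<open>V\<close> of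
  \<open>0\<close> on which every \<open>\<phi>(c \<oplus> -)\<close> stays \<open>\<delta>/2\<close>-close to \<open>\<phi>(c)\<close>. For \<open>g \<in> O(V,\<epsilon>)\<close> the integrands
  of \<open>\<Phi>(f \<oplus> g)\<close> and \<open>\<Phi>(f)\<close> then differ by less than \<open>\<delta>/2\<close> outside a set of measure \<open>< \<epsilon>\<close>,
  and by at most \<open>2 sup |\<phi>|\<close> on it.
\<close>

lemma partition_cover:
  fixes a :: "nat \<Rightarrow> real"
  assumes "a 0 \<le> r" "r < a n"
  shows "\<exists>k<n. a k \<le> r \<and> r < a (Suc k)"
  using assms(2)
proof (induction n)
  case 0
  then show ?case using assms(1) by simp
next
  case (Suc n)
  then show ?case
    by (cases "r < a n") (auto intro: less_SucI simp: not_less)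
qed

lemma simple_function_step_fun:
  assumes "f \<in> step_funs z"
  shows "simple_function lebesgue f"
proof -
  obtain n a where outside: "\<And>r. r \<notin> {0..<1} \<Longrightarrow> f r = z"
    and a: "a 0 = 0" "a n = 1"
    and const: "\<And>k r. k < n \<Longrightarrow> r \<in> {a k..<a (Suc k)} \<Longrightarrow> f r = f (a k)"
    using assms unfolding step_funs_def by blast
  have cover: "\<exists>k<n. r \<in> {a k..<a (Suc k)}" if "r \<in> {0..<1}" for r
    using partition_cover[of a r n] a that by auto
  have "range f \<subseteq> insert z ((\<lambda>k. f (a k)) ` {..<n})"
  proof clarify
    fix r assume "f r \<notin> (\<lambda>k. f (a k)) ` {..<n}"
    then show "f r = z"
      using outside cover const by (metis image_eqI lessThan_iff)
  qed
  then have "finite (range f)"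
    by (rule finite_subset) simp
  moreover have "f -` {c} = {r. r \<notin> {0..<1} \<and> c = z} \<union>
      (\<Union>k \<in> {k. k < n \<and> f (a k) = c}. {a k..<a (Suc k)})" for c
  proof (intro set_eqI iffI)
    fix r assume r: "r \<in> f -` {c}"
    show "r \<in> {r. r \<notin> {0..<1} \<and> c = z} \<union> (\<Union>k \<in> {k. k < n \<and> f (a k) = c}. {a k..<a (Suc k)})"
    proof (cases "r \<in> {0..<1}")
      case True
      then obtain k where k: "k < n" "r \<in> {a k..<a (Suc k)}"
        using cover by blast
      then have "f (a k) = c"
        using r const[OF k] by simp
      then show ?thesis
        using k by blast
    next
      case False
      then have "c = z"
        using r outside[OF False] by simp
      then show ?thesis
        using False by blast
    qed
  qed (use outside const in auto)
  moreover have "{r::real. r \<notin> {0..<1} \<and> c = z} \<in> sets lebesgue" for c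
  proof -
    have eq: "{r::real. r \<notin> {0..<1} \<and> c = z} = (if c = z then {..<0} \<union> {1..} else {})"
      by auto
    show ?thesis
      unfolding eq by auto
  qed
  ultimately show ?thesis
    unfolding simple_function_def by auto
qed

lemma borel_measurable_step_fun:
  "f \<in> step_funs z \<Longrightarrow> (\<lambda>r. \<psi> (f r) :: real) \<in> borel_measurable lebesgue"
  using borel_measurable_simple_function[OF simple_function_compose[OF simple_function_step_fun]]
  by (simp add: o_def)

lemma borel_measurable_step_fun_pair:
  assumes "f \<in> step_funs z" "g \<in> step_funs z"
  shows "(\<lambda>r. \<psi> (f r) (g r) :: real) \<in> borel_measurable lebesgue"
proof -
  have "simple_function lebesgue (case_prod \<psi> \<circ> (\<lambda>r. (f r, g r)))"
    using assms by (intro simple_function_compose simple_function_Pair simple_function_step_fun)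
  then show ?thesis
    by (auto dest: borel_measurable_simple_function simp: o_def)
qed

lemma step_fun_preimage_lmeasurable:
  assumes "g \<in> step_funs z"
  shows "{r \<in> {0..<1}. g r \<in> S} \<in> lmeasurable"
proof (rule bounded_set_imp_lmeasurable)
  show "bounded {r \<in> {0..<1::real}. g r \<in> S}"
    by (rule bounded_subset[of "{0..1}"]) auto
  have "g -` S \<inter> space lebesgue \<in> sets lebesgue"
    using simple_function_step_fun[OF assms] by (rule simple_functionD)
  moreover have "{r \<in> {0..<1}. g r \<in> S} = g -` S \<inter> space lebesgue \<inter> {0..<1}"
    by auto
  ultimately show "{r \<in> {0..<1}. g r \<in> S} \<in> sets lebesgue"
    by auto
qed

lemma continuous_map_partial_left:
  assumes "continuous_map (prod_topology X Y) Z (\<lambda>(x, y). g x y)" "c \<in> topspace X"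
  shows "continuous_map Y Z (g c)"
  using continuous_map_compose[OF continuous_map_pairedI[OF continuous_map_const[THEN iffD2] continuous_map_id] assms(1)]
    assms(2) by (simp add: o_def)

lemma O_nbhd_mono:
  assumes "V' \<subseteq> V" "\<epsilon>' \<le> \<epsilon>"
  shows "O_nbhd z V' \<epsilon>' \<subseteq> O_nbhd z V \<epsilon>"
proof
  fix g assume "g \<in> O_nbhd z V' \<epsilon>'"
  then have g: "g \<in> step_funs z" and small: "measure lebesgue {r \<in> {0..<1}. g r \<notin> V'} < \<epsilon>'"
    unfolding O_nbhd_def by auto
  have "measure lebesgue {r \<in> {0..<1}. g r \<notin> V} \<le> measure lebesgue {r \<in> {0..<1}. g r \<notin> V'}"
    using assms(1) step_fun_preimage_lmeasurable[OF g, of "- V"] step_fun_preimage_lmeasurable[OF g, of "- V'"]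
    by (intro measure_mono_fmeasurable) auto
  then show "g \<in> O_nbhd z V \<epsilon>"
    using g small assms(2) unfolding O_nbhd_def by auto
qed

lemma O_nbhd_Int_min:
  "O_nbhd z (V\<^sub>1 \<inter> V\<^sub>2) (min \<epsilon>\<^sub>1 \<epsilon>\<^sub>2) \<subseteq> O_nbhd z V\<^sub>1 \<epsilon>\<^sub>1 \<inter> O_nbhd z V\<^sub>2 \<epsilon>\<^sub>2"
  using O_nbhd_mono[of "V\<^sub>1 \<inter> V\<^sub>2" V\<^sub>1 "min \<epsilon>\<^sub>1 \<epsilon>\<^sub>2" \<epsilon>\<^sub>1 z]
    O_nbhd_mono[of "V\<^sub>1 \<inter> V\<^sub>2" V\<^sub>2 "min \<epsilon>\<^sub>1 \<epsilon>\<^sub>2" \<epsilon>\<^sub>2 z] by auto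

lemma openin_bullet_topology:
  "openin (bullet_topology op z T) U \<longleftrightarrow> U \<subseteq> step_funs z \<and>
     (\<forall>f \<in> U. \<exists>V \<epsilon>. openin T V \<and> z \<in> V \<and> \<epsilon> > 0 \<and> bullet_op op f ` O_nbhd z V \<epsilon> \<subseteq> U)"
proof -
  define P where "P U \<longleftrightarrow> U \<subseteq> step_funs z \<and>
     (\<forall>f \<in> U. \<exists>V \<epsilon>. openin T V \<and> z \<in> V \<and> \<epsilon> > 0 \<and> bullet_op op f ` O_nbhd z V \<epsilon> \<subseteq> U)" for U
  have "P (S \<inter> U)" if "P S" "P U" for S U
    unfolding P_def
  proof (intro conjI ballI)
    show "S \<inter> U \<subseteq> step_funs z" using \<open>P S\<close> by (auto simp: P_def)
  next
    fix f assume f: "f \<in> S \<inter> U"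
    obtain V\<^sub>1 \<epsilon>\<^sub>1 where
      "openin T V\<^sub>1" "z \<in> V\<^sub>1" "\<epsilon>\<^sub>1 > 0" "bullet_op op f ` O_nbhd z V\<^sub>1 \<epsilon>\<^sub>1 \<subseteq> S"
      using \<open>P S\<close> f unfolding P_def by blast
    moreover obtain V\<^sub>2 \<epsilon>\<^sub>2 where
      "openin T V\<^sub>2" "z \<in> V\<^sub>2" "\<epsilon>\<^sub>2 > 0" "bullet_op op f ` O_nbhd z V\<^sub>2 \<epsilon>\<^sub>2 \<subseteq> U"
      using \<open>P U\<close> f unfolding P_def by blast
    moreover have "bullet_op op f ` O_nbhd z (V\<^sub>1 \<inter> V\<^sub>2) (min \<epsilon>\<^sub>1 \<epsilon>\<^sub>2) \<subseteq> S \<inter> U"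
      using O_nbhd_Int_min[of z V\<^sub>1 V\<^sub>2 \<epsilon>\<^sub>1 \<epsilon>\<^sub>2] calculation by blast
    ultimately show "\<exists>V \<epsilon>. openin T V \<and> z \<in> V \<and> \<epsilon> > 0 \<and> bullet_op op f ` O_nbhd z V \<epsilon> \<subseteq> S \<inter> U"
      by (intro exI[of _ "V\<^sub>1 \<inter> V\<^sub>2"] exI[of _ "min \<epsilon>\<^sub>1 \<epsilon>\<^sub>2"]) auto
  qed
  moreover have "P (\<Union>\<K>)" if "\<forall>U\<in>\<K>. P U" for \<K>
    unfolding P_def
  proof (intro conjI ballI)
    show "\<Union>\<K> \<subseteq> step_funs z" using that by (auto simp: P_def)
  next
    fix f assume "f \<in> \<Union>\<K>"
    then obtain U where "U \<in> \<K>" "f \<in> U" by blast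
    moreover from that \<open>U \<in> \<K>\<close> have "P U" by blast
    ultimately obtain V \<epsilon> where "openin T V" "z \<in> V" "\<epsilon> > 0" "bullet_op op f ` O_nbhd z V \<epsilon> \<subseteq> U"
      unfolding P_def by blast
    then show "\<exists>V \<epsilon>. openin T V \<and> z \<in> V \<and> \<epsilon> > 0 \<and> bullet_op op f ` O_nbhd z V \<epsilon> \<subseteq> \<Union>\<K>"
      using \<open>U \<in> \<K>\<close> by blast
  qed
  ultimately have "istopology P"
    unfolding istopology_def by blast
  then show ?thesis
    unfolding bullet_topology_def P_def[symmetric] by simp
qed

lemma continuous_map_bullet_topologyI:
  fixes \<Phi> :: "(real \<Rightarrow> 'a) \<Rightarrow> real"
  assumes "\<And>f \<delta>. f \<in> step_funs z \<Longrightarrow> \<delta> > 0 \<Longrightarrow> \<exists>V \<epsilon>. openin T V \<and> z \<in> V \<and> \<epsilon> > 0 \<and>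
             (\<forall>g \<in> O_nbhd z V \<epsilon>. \<bar>\<Phi> (bullet_op op f g) - \<Phi> f\<bar> < \<delta>)"
  shows "continuous_map (bullet_topology op z T) euclideanreal \<Phi>"
  unfolding continuous_map_def
proof (intro conjI allI impI)
  let ?X = "bullet_topology op z T"
  show "\<Phi> \<in> topspace ?X \<rightarrow> topspace euclideanreal" by simp
  fix U :: "real set" assume "openin euclideanreal U"
  have topspace: "topspace ?X \<subseteq> step_funs z"
    and topspace_nhd: "\<forall>f \<in> topspace ?X. \<exists>V \<epsilon>. openin T V \<and> z \<in> V \<and>
      \<epsilon> > 0 \<and> bullet_op op f ` O_nbhd z V \<epsilon> \<subseteq> topspace ?X"
    using openin_topspace[of ?X] unfolding openin_bullet_topology by auto
  show "openin ?X {f \<in> topspace ?X. \<Phi> f \<in> U}"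
    unfolding openin_bullet_topology
  proof (intro conjI ballI)
    show "{f \<in> topspace ?X. \<Phi> f \<in> U} \<subseteq> step_funs z" using topspace by blast
  next
    fix f assume "f \<in> {f \<in> topspace ?X. \<Phi> f \<in> U}"
    then have f: "f \<in> topspace ?X" "\<Phi> f \<in> U" by auto
    moreover have "open U"
      using \<open>openin euclideanreal U\<close> by simp
    ultimately obtain \<delta> where "\<delta> > 0" and \<delta>: "ball (\<Phi> f) \<delta> \<subseteq> U"
      by (meson openE)
    obtain V\<^sub>1 \<epsilon>\<^sub>1 where V\<^sub>1: "openin T V\<^sub>1" "z \<in> V\<^sub>1" "\<epsilon>\<^sub>1 > 0"
      and close: "\<forall>g \<in> O_nbhd z V\<^sub>1 \<epsilon>\<^sub>1. \<bar>\<Phi> (bullet_op op f g) - \<Phi> f\<bar> < \<delta>"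
      using assms[OF _ \<open>\<delta> > 0\<close>] f(1) topspace by blast
    obtain V\<^sub>2 \<epsilon>\<^sub>2 where V\<^sub>2: "openin T V\<^sub>2" "z \<in> V\<^sub>2" "\<epsilon>\<^sub>2 > 0"
      and inside: "bullet_op op f ` O_nbhd z V\<^sub>2 \<epsilon>\<^sub>2 \<subseteq> topspace ?X"
      using bspec[OF topspace_nhd f(1)] by blast
    have "bullet_op op f ` O_nbhd z (V\<^sub>1 \<inter> V\<^sub>2) (min \<epsilon>\<^sub>1 \<epsilon>\<^sub>2) \<subseteq> {f \<in> topspace ?X. \<Phi> f \<in> U}"
    proof clarify
      fix g assume "g \<in> O_nbhd z (V\<^sub>1 \<inter> V\<^sub>2) (min \<epsilon>\<^sub>1 \<epsilon>\<^sub>2)"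
      then have "g \<in> O_nbhd z V\<^sub>1 \<epsilon>\<^sub>1" "g \<in> O_nbhd z V\<^sub>2 \<epsilon>\<^sub>2"
        using O_nbhd_Int_min[of z V\<^sub>1 V\<^sub>2 \<epsilon>\<^sub>1 \<epsilon>\<^sub>2] by blast+
      then have "bullet_op op f g \<in> topspace ?X" "\<Phi> (bullet_op op f g) \<in> ball (\<Phi> f) \<delta>"
        using close inside by (auto simp: dist_real_def abs_minus_commute)
      then show "bullet_op op f g \<in> topspace ?X \<and> \<Phi> (bullet_op op f g) \<in> U"
        using \<delta> by blast
    qed
    moreover have "openin T (V\<^sub>1 \<inter> V\<^sub>2)" "z \<in> V\<^sub>1 \<inter> V\<^sub>2" "min \<epsilon>\<^sub>1 \<epsilon>\<^sub>2 > 0"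
      using V\<^sub>1 V\<^sub>2 by auto
    ultimately show "\<exists>V \<epsilon>. openin T V \<and> z \<in> V \<and> \<epsilon> > 0 \<and>
        bullet_op op f ` O_nbhd z V \<epsilon> \<subseteq> {f \<in> topspace ?X. \<Phi> f \<in> U}"
      by blast
  qed
qed

lemma set_integrable_bounded:
  fixes h :: "'a \<Rightarrow> real"
  assumes "A \<in> sets M" "emeasure M A < \<infinity>" "h \<in> borel_measurable M" "\<And>x. x \<in> A \<Longrightarrow> \<bar>h x\<bar> \<le> B"
  shows "set_integrable M A h"
  unfolding set_integrable_def
  using assms by (intro integrableI_bounded_set_indicator[where B = B]) auto

lemma abs_set_integral_le_split:
  fixes h :: "'a \<Rightarrow> real"
  assumes "A \<in> sets M" "emeasure M A < \<infinity>" "E \<in> sets M" "E \<subseteq> A" "h \<in> borel_measurable M"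
    and "0 \<le> \<eta>" "\<And>x. x \<in> A - E \<Longrightarrow> \<bar>h x\<bar> \<le> \<eta>" "\<And>x. x \<in> E \<Longrightarrow> \<bar>h x\<bar> \<le> C"
  shows "\<bar>LINT x:A|M. h x\<bar> \<le> \<eta> * measure M A + C * measure M E"
proof -
  have h: "set_integrable M A h"
    using assms by (intro set_integrable_bounded[where B = "max \<eta> C"]) force+
  have const: "set_integrable M A (\<lambda>x. \<eta>)"
    using assms by (intro set_integrable_bounded[where B = "\<bar>\<eta>\<bar>"]) auto
  have step: "set_integrable M A (\<lambda>x. C * indicator E x)"
    using assms by (intro set_integrable_bounded[where B = "\<bar>C\<bar>"]) (auto simp: indicator_def)
  note bound = set_integral_add(1)[OF const step]
  have "\<bar>LINT x:A|M. h x\<bar> \<le> (LINT x:A|M. \<bar>h x\<bar>)"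
    using set_integral_norm_bound[OF h] by simp
  also have "\<dots> \<le> (LINT x:A|M. \<eta> + C * indicator E x)"
  proof (rule set_integral_mono[OF set_integrable_abs[OF h] bound])
    fix x assume "x \<in> A"
    then show "\<bar>h x\<bar> \<le> \<eta> + C * indicator E x"
      using assms(6) assms(7,8)[of x] by (cases "x \<in> E") auto
  qed
  also have "\<dots> = \<eta> * measure M A + C * measure M E"
  proof -
    have "(LINT x:A|M. indicator E x) = integral\<^sup>L M (indicator E :: 'a \<Rightarrow> real)"
      unfolding set_lebesgue_integral_def using \<open>E \<subseteq> A\<close>
      by (intro Bochner_Integration.integral_cong) (auto simp: indicator_def)
    also have "\<dots> = measure M E"
      using sets.sets_into_space[OF \<open>E \<in> sets M\<close>] by (simp add: Int_absorb2)
    finally show ?thesis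
      using assms by (simp add: set_integral_add(2)[OF const step] set_integral_const)
  qed
  finally show ?thesis .
qed

definition mean_value :: "('a \<Rightarrow> real) \<Rightarrow> (real \<Rightarrow> 'a) \<Rightarrow> real" where
  "mean_value \<phi> f = (LINT r:{0..<1}|lebesgue. \<phi> (f r))"

lemma mean_value_bullet_const: "mean_value \<phi> (bullet_const z x) = \<phi> x"
proof -
  have "mean_value \<phi> (bullet_const z x) = (LINT r:{0..<1::real}|lebesgue. \<phi> x)"
    unfolding mean_value_def bullet_const_def by (rule set_lebesgue_integral_cong) auto
  then show ?thesis
    by (simp add: set_integral_const)
qed

lemma abs_mean_value_le:
  assumes "f \<in> step_funs z" "\<And>x. \<bar>\<phi> x\<bar> \<le> B"
  shows "\<bar>mean_value \<phi> f\<bar> \<le> B"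
  using abs_set_integral_le_split[of "{0..<1}" lebesgue "{}" "\<lambda>r. \<phi> (f r)" B 0]
    borel_measurable_step_fun[OF assms(1)] assms(2) assms(2)[of z]
  unfolding mean_value_def by fastforce

lemma abs_mean_value_bullet_op_diff_le:
  assumes f: "f \<in> step_funs z" and g: "g \<in> step_funs z" and \<phi>: "\<And>x. \<bar>\<phi> x\<bar> \<le> B"
    and close: "\<And>r. g r \<in> V \<Longrightarrow> \<bar>\<phi> (op (f r) (g r)) - \<phi> (f r)\<bar> \<le> \<eta>" and "0 \<le> \<eta>"
  shows "\<bar>mean_value \<phi> (bullet_op op f g) - mean_value \<phi> f\<bar>
           \<le> \<eta> + 2 * B * measure lebesgue {r \<in> {0..<1}. g r \<notin> V}"
proof -
  have meas: "(\<lambda>r. \<phi> (op (f r) (g r))) \<in> borel_measurable lebesgue"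
    "(\<lambda>r. \<phi> (f r)) \<in> borel_measurable lebesgue"
    using borel_measurable_step_fun_pair[OF f g] borel_measurable_step_fun[OF f] .
  have "mean_value \<phi> (bullet_op op f g) - mean_value \<phi> f =
      (LINT r:{0..<1}|lebesgue. \<phi> (op (f r) (g r)) - \<phi> (f r))"
    unfolding mean_value_def bullet_op_def
    using meas \<phi> by (intro set_integral_diff(2)[symmetric] set_integrable_bounded) auto
  also have "\<bar>\<dots>\<bar> \<le> \<eta> * measure lebesgue {0..<1::real} + 2 * B * measure lebesgue {r \<in> {0..<1}. g r \<notin> V}"
  proof (rule abs_set_integral_le_split)
    show "{r \<in> {0..<1}. g r \<notin> V} \<in> sets lebesgue"
      using fmeasurableD[OF step_fun_preimage_lmeasurable[OF g, of "- V"]] by simp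
    show "\<bar>\<phi> (op (f r) (g r)) - \<phi> (f r)\<bar> \<le> 2 * B" for r
      using \<phi>[of "op (f r) (g r)"] \<phi>[of "f r"] by linarith
  qed (use meas close \<open>0 \<le> \<eta>\<close> in auto)
  finally show ?thesis
    by simp
qed

lemma mean_value_bullet_op_close:
  assumes translation: "\<And>c. continuous_map T T (op c)" and "z \<in> topspace T" "\<And>c. op c z = c"
    and \<phi>: "continuous_map T euclideanreal \<phi>" "\<And>x. \<bar>\<phi> x\<bar> \<le> B"
    and f: "f \<in> step_funs z" and "\<delta> > 0"
  shows "\<exists>V \<epsilon>. openin T V \<and> z \<in> V \<and> \<epsilon> > 0 \<and>
           (\<forall>g \<in> O_nbhd z V \<epsilon>. \<bar>mean_value \<phi> (bullet_op op f g) - mean_value \<phi> f\<bar> < \<delta>)"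
proof -
  define W where "W c = {v \<in> topspace T. \<phi> (op c v) \<in> ball (\<phi> c) (\<delta>/2)}" for c
  define V where "V = \<Inter>(W ` range f)"
  have "openin T (W c)" for c
    unfolding W_def using continuous_map_compose[OF translation \<phi>(1)]
    by (intro openin_continuous_map_preimage) (auto simp: o_def)
  moreover have "finite (range f)"
    using simple_functionD(1)[OF simple_function_step_fun[OF f]] by simp
  ultimately have "openin T V"
    unfolding V_def by (intro openin_Inter) auto
  moreover have "z \<in> V"
    using assms(2,3) \<open>\<delta> > 0\<close> by (simp add: V_def W_def)
  moreover have "B \<ge> 0"
    using \<phi>(2)[of z] by linarith
  then have "\<delta> / (4 * B + 1) > 0"
    using \<open>\<delta> > 0\<close> by simp
  moreover have "\<bar>mean_value \<phi> (bullet_op op f g) - mean_value \<phi> f\<bar> < \<delta>"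
    if "g \<in> O_nbhd z V (\<delta> / (4 * B + 1))" for g
  proof -
    have g: "g \<in> step_funs z" and small: "measure lebesgue {r \<in> {0..<1}. g r \<notin> V} < \<delta> / (4 * B + 1)"
      using that unfolding O_nbhd_def by auto
    have "\<bar>\<phi> (op (f r) (g r)) - \<phi> (f r)\<bar> \<le> \<delta>/2" if "g r \<in> V" for r
    proof -
      from that have "g r \<in> W (f r)"
        unfolding V_def by blast
      then show ?thesis
        unfolding W_def by (simp add: dist_real_def abs_minus_commute)
    qed
    then have "\<bar>mean_value \<phi> (bullet_op op f g) - mean_value \<phi> f\<bar>
        \<le> \<delta>/2 + 2 * B * measure lebesgue {r \<in> {0..<1}. g r \<notin> V}"
      using \<open>\<delta> > 0\<close> by (intro abs_mean_value_bullet_op_diff_le[OF f g \<phi>(2)]) auto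
    also have "2 * B * measure lebesgue {r \<in> {0..<1}. g r \<notin> V} \<le> 2 * B * (\<delta> / (4 * B + 1))"
      using small \<open>B \<ge> 0\<close> by (intro mult_left_mono) auto
    also have "\<delta>/2 + 2 * B * (\<delta> / (4 * B + 1)) < \<delta>"
      using \<open>B \<ge> 0\<close> \<open>\<delta> > 0\<close> by (simp add: field_simps)
    finally show ?thesis
      by simp
  qed
  ultimately show ?thesis
    by blast
qed

theorem mainTheorem7:
  fixes op :: "'a \<Rightarrow> 'a \<Rightarrow> 'a" and z :: 'a and T :: "'a topology" and \<phi> :: "'a \<Rightarrow> real"
  assumes "top_gyrogroup op z T"
    and "continuous_map T euclideanreal \<phi>"
    and "bounded (range \<phi>)"
  shows "\<exists>\<Phi> :: (real \<Rightarrow> 'a) \<Rightarrow> real.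
           continuous_map (bullet_topology op z T) euclideanreal \<Phi> \<and>
           bounded (\<Phi> ` step_funs z) \<and>
           (\<forall>x. \<Phi> (bullet_const z x) = \<phi> x)"
proof (intro exI conjI allI)
  have "gyrogroup op z" "topspace T = UNIV"
    and op: "continuous_map (prod_topology T T) T (\<lambda>(x, y). op x y)"
    using assms(1) unfolding top_gyrogroup_def by auto
  then have right_identity: "op c z = c" and translation: "continuous_map T T (op c)" for c
    using continuous_map_partial_left[OF op] unfolding gyrogroup_def by auto
  obtain B where B: "\<And>x. \<bar>\<phi> x\<bar> \<le> B"
    using assms(3) by (auto simp: bounded_iff)
  show "continuous_map (bullet_topology op z T) euclideanreal (mean_value \<phi>)"
    using mean_value_bullet_op_close[OF translation _ right_identity assms(2) B] \<open>topspace T = UNIV\<close>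
    by (intro continuous_map_bullet_topologyI) auto
  show "bounded (mean_value \<phi> ` step_funs z)"
    using abs_mean_value_le[where \<phi> = \<phi>, OF _ B] by (auto simp: bounded_iff)
  show "mean_value \<phi> (bullet_const z x) = \<phi> x" for x
    by (rule mean_value_bullet_const)
qed

end
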